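(* If $X$ is a cohesive almost zero-dimensional space and $K\subset X$ is $\sigma$-compact, then $X\setminus K$ is cohesive.
   Context: All spaces are separable and metrizable. A subset $A$ of $X$ is a C-set in $X$ if it is an intersection of clopen subsets of $X$. $X$ is almost zero-dimensional if every point has a neighborhood basis consisting of C-sets in $X$. $X$ is cohesive if every point $x\in X$ has a neighborhood which contains no non-empty clopen subset of $X$. *)

theory Defs
  imports "HOL-Analysis.Analysis"
begin

text \<open>A C-set in X: an intersection of clopen subsets of X (the empty intersection
  being the whole space topspace X).\<close>
definition C_set :: "'a topology \<Rightarrow> 'a set \<Rightarrow> bool" where
  "C_set X A \<longleftrightarrow>
     (\<exists>\<U>. (\<forall>U\<in>\<U>. closedin X U \<and> openin X U) \<and> A = topspace X \<inter> \<Inter>\<U>)"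

definition almost_zero_dimensional :: "'a topology \<Rightarrow> bool" where
  "almost_zero_dimensional X \<longleftrightarrow> neighbourhood_base_of (C_set X) X"

definition cohesive :: "'a topology \<Rightarrow> bool" where
  "cohesive X \<longleftrightarrow>
     (\<forall>x\<in>topspace X. \<exists>N. (\<exists>V. openin X V \<and> x \<in> V \<and> V \<subseteq> N) \<and> N \<subseteq> topspace X \<and>
        \<not> (\<exists>C. C \<noteq> {} \<and> closedin X C \<and> openin X C \<and> C \<subseteq> N))"

definition sigma_compactin :: "'a topology \<Rightarrow> 'a set \<Rightarrow> bool" where
  "sigma_compactin X K \<longleftrightarrow>
     (\<exists>\<F>. countable \<F> \<and> (\<forall>C\<in>\<F>. compactin X C) \<and> K = \<Union>\<F>)"

end

theory Submission
  imports Defs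
begin

text \<open>Let \<open>x \<notin> K\<close>, let \<open>V\<close> be an open neighbourhood of \<open>x\<close> containing no non-empty clopen
  subset of \<open>X\<close>, and let \<open>D \<subseteq> V\<close> be a C-set neighbourhood of \<open>x\<close>. A clopen subset \<open>C\<close> of
  \<open>X - K\<close> with \<open>C \<subseteq> D\<close> is separated in \<open>X\<close> from \<open>(X - K - C) \<union> (X - V)\<close>, so hereditary
  normality gives an open \<open>U \<supseteq> C\<close> and a closed \<open>Z \<subseteq> V\<close> with \<open>U \<subseteq> Z\<close> and \<open>Z - U \<subseteq> K\<close>.
  The gap \<open>Z - U\<close> is closed in the \<open>\<sigma>\<close>-compact \<open>K\<close>, say \<open>Z - U = \<Union>\<^sub>n F\<^sub>n\<close> with \<open>F\<^sub>n\<close> compact.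
  Cover \<open>U\<close> by countably many C-sets \<open>N\<^sub>k\<close> whose interiors cover \<open>U\<close>, with \<open>a \<in> int N\<^sub>j\<close> for
  some \<open>a \<in> C\<close>. A compact set disjoint from a C-set is separated from it by a clopen set, so
  there are clopen \<open>L\<^sub>n \<supseteq> F\<^sub>n\<close> missing \<open>N\<^sub>j \<union> N\<^sub>0 \<union> \<dots> \<union> N\<^sub>n\<close>. Then \<open>Z - \<Union>\<^sub>n L\<^sub>n\<close> contains \<open>a\<close>
  and is closed; it is open because near a point of \<open>int N\<^sub>k\<close> only the \<open>L\<^sub>n\<close> with \<open>n < k\<close> matter.
  So it is a non-empty clopen subset of \<open>V\<close>, and \<open>C\<close> must be empty.\<close>

lemma separable_metrizable_imp_second_countable:
  assumes "metrizable_space X" "separable_space X"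
  shows "second_countable X"
proof -
  obtain M d where "Metric_space M d" and X: "X = Metric_space.mtopology M d"
    using assms(1) metrizable_space_def by blast
  interpret Metric_space M d by fact
  obtain C where C: "countable C" "C \<subseteq> M" "mtopology closure_of C = M"
    using assms(2) unfolding separable_space_def X by auto
  define \<B> where "\<B> = (\<lambda>(c,n). mball c (1 / Suc n)) ` (C \<times> (UNIV :: nat set))"
  have "\<exists>B\<in>\<B>. x \<in> B \<and> B \<subseteq> U" if "openin mtopology U" "x \<in> U" for U x
  proof -
    have xM: "x \<in> M" and "\<exists>r>0. mball x r \<subseteq> U"
      using that openin_mtopology by auto
    then obtain r where r: "r > 0" "mball x r \<subseteq> U" by blast
    obtain n :: nat where n: "inverse (real (Suc n)) < r / 2"
      using reals_Archimedean r(1) by (metis half_gt_zero)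
    have "x \<in> mtopology closure_of C" using C xM by simp
    then obtain c where c: "c \<in> C" "c \<in> mball x (1 / Suc n)"
      unfolding in_closure_of
      by (meson centre_in_mball_iff of_nat_0_less_iff openin_mball xM zero_less_Suc
          zero_less_divide_1_iff)
    have "mball c (1 / Suc n) \<subseteq> mball x r"
    proof
      fix y assume y: "y \<in> mball c (1 / Suc n)"
      have "d x y \<le> d x c + d c y" using y c triangle by auto
      also have "\<dots> < r" using y c n by (simp add: inverse_eq_divide)
      finally show "y \<in> mball x r" using y xM by auto
    qed
    moreover have "x \<in> mball c (1 / Suc n)" using c commute by auto
    ultimately show ?thesis unfolding \<B>_def using c r by blast
  qed
  moreover have "countable \<B>" "\<forall>B\<in>\<B>. openin mtopology B"
    unfolding \<B>_def using C(1) by auto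
  ultimately show ?thesis unfolding second_countable_def X by blast
qed

lemma sigma_compactin_closedin_subset:
  assumes "sigma_compactin X K" "closedin X B" "B \<subseteq> K"
  shows "sigma_compactin X B"
proof -
  obtain \<F> where \<F>: "countable \<F>" "\<forall>C\<in>\<F>. compactin X C" "K = \<Union>\<F>"
    using assms(1) unfolding sigma_compactin_def by blast
  have "B = \<Union>((\<inter>) B ` \<F>)" using assms(3) \<F>(3) by blast
  moreover have "\<forall>C\<in>(\<inter>) B ` \<F>. compactin X C"
    using \<F>(2) assms(2) closed_Int_compactin by blast
  ultimately show ?thesis
    unfolding sigma_compactin_def using \<F>(1) by blast
qed

lemma sigma_compactin_nat_indexed:
  assumes "sigma_compactin X K"
  obtains F :: "nat \<Rightarrow> 'a set" where "\<And>n. compactin X (F n)" "K = (\<Union>n. F n)"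
proof -
  obtain \<F> where \<F>: "countable \<F>" "\<forall>C\<in>\<F>. compactin X C" "K = \<Union>\<F>"
    using assms unfolding sigma_compactin_def by blast
  show thesis
  proof (cases "\<F> = {}")
    case True
    then show thesis using \<F>(3) by (intro that[of "\<lambda>_. {}"]) auto
  next
    case False
    then show thesis using \<F> by (intro that[of "from_nat_into \<F>"]) (auto simp: from_nat_into)
  qed
qed

lemma closedin_C_set:
  assumes "C_set X A"
  shows "closedin X A"
proof -
  obtain \<U> where "\<forall>U\<in>\<U>. closedin X U \<and> openin X U" "A = topspace X \<inter> \<Inter>\<U>"
    using assms unfolding C_set_def by blast
  then show ?thesis by (cases "\<U> = {}") (auto intro!: closedin_Int closedin_Inter)
qed

lemma C_set_empty: "C_set X {}"
  unfolding C_set_def by (rule exI[of _ "{{}}"]) auto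

lemma C_set_Un:
  assumes "C_set X A" "C_set X B"
  shows "C_set X (A \<union> B)"
proof -
  obtain \<U> where \<U>: "\<forall>U\<in>\<U>. closedin X U \<and> openin X U" "A = topspace X \<inter> \<Inter>\<U>"
    using assms(1) unfolding C_set_def by blast
  obtain \<V> where \<V>: "\<forall>V\<in>\<V>. closedin X V \<and> openin X V" "B = topspace X \<inter> \<Inter>\<V>"
    using assms(2) unfolding C_set_def by blast
  have "A \<union> B = topspace X \<inter> \<Inter>{U \<union> V |U V. U \<in> \<U> \<and> V \<in> \<V>}"
    unfolding \<U>(2) \<V>(2) by blast
  moreover have "\<forall>W\<in>{U \<union> V |U V. U \<in> \<U> \<and> V \<in> \<V>}. closedin X W \<and> openin X W"
    using \<U>(1) \<V>(1) by auto
  ultimately show ?thesis unfolding C_set_def by blast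
qed

lemma C_set_finite_UN:
  assumes "finite I" "\<And>i. i \<in> I \<Longrightarrow> C_set X (N i)"
  shows "C_set X (\<Union>i\<in>I. N i)"
  using assms by (induction I rule: finite_induct) (auto simp: C_set_empty C_set_Un)

lemma compactin_C_set_clopen_separation:
  assumes "compactin X B" "C_set X M" "disjnt B M"
  obtains L where "closedin X L" "openin X L" "B \<subseteq> L" "disjnt L M"
proof -
  obtain \<U> where \<U>: "\<forall>U\<in>\<U>. closedin X U \<and> openin X U" "M = topspace X \<inter> \<Inter>\<U>"
    using assms(2) unfolding C_set_def by blast
  define \<V> where "\<V> = (\<lambda>U. topspace X - U) ` \<U>"
  have "B \<subseteq> topspace X" using assms(1) compactin_subset_topspace by blast
  then have "B \<subseteq> \<Union>\<V>" using assms(3) \<U>(2) unfolding \<V>_def disjnt_def by blast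
  moreover have "\<forall>V\<in>\<V>. openin X V" unfolding \<V>_def using \<U>(1) by auto
  ultimately obtain \<F> where \<F>: "finite \<F>" "\<F> \<subseteq> \<V>" "B \<subseteq> \<Union>\<F>"
    using assms(1) unfolding compactin_def by meson
  have "closedin X (\<Union>\<F>)"
    using \<F>(1,2) \<U>(1) by (intro closedin_Union) (auto simp: \<V>_def)
  moreover have "openin X (\<Union>\<F>)"
    using \<F>(2) \<U>(1) by (intro openin_Union) (auto simp: \<V>_def)
  moreover have "disjnt (\<Union>\<F>) M" using \<F>(2) \<U>(2) unfolding \<V>_def disjnt_def by blast
  ultimately show thesis using \<F>(3) that by blast
qed

lemma almost_zero_dimensional_C_set_neighbourhood:
  assumes "almost_zero_dimensional X" "openin X W" "x \<in> W"
  obtains U D where "openin X U" "C_set X D" "x \<in> U" "U \<subseteq> D" "D \<subseteq> W"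
  using assms unfolding almost_zero_dimensional_def neighbourhood_base_of by meson

lemma almost_zero_dimensional_C_set_cover:
  assumes "almost_zero_dimensional X" "second_countable X" "openin X S"
  obtains N :: "nat \<Rightarrow> 'a set" where "\<And>k. C_set X (N k)" "\<And>k. N k \<subseteq> S"
    "\<And>p. p \<in> S \<Longrightarrow> \<exists>k W. openin X W \<and> p \<in> W \<and> W \<subseteq> N k"
proof -
  obtain \<B> where \<B>: "countable \<B>" "\<forall>B\<in>\<B>. openin X B"
    "\<And>U x. openin X U \<Longrightarrow> x \<in> U \<Longrightarrow> \<exists>B\<in>\<B>. x \<in> B \<and> B \<subseteq> U"
    using assms(2) unfolding second_countable_def by meson
  define \<B>' where "\<B>' = {B\<in>\<B>. \<exists>D. C_set X D \<and> B \<subseteq> D \<and> D \<subseteq> S}"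
  have "\<forall>B\<in>\<B>'. \<exists>D. C_set X D \<and> B \<subseteq> D \<and> D \<subseteq> S" unfolding \<B>'_def by blast
  then obtain g where g: "\<And>B. B \<in> \<B>' \<Longrightarrow> C_set X (g B) \<and> B \<subseteq> g B \<and> g B \<subseteq> S"
    by metis
  have "countable \<B>'" unfolding \<B>'_def using \<B>(1) by simp
  define N where "N k = (if \<B>' = {} then {} else g (from_nat_into \<B>' k))" for k
  show thesis
  proof
    show "C_set X (N k)" "N k \<subseteq> S" for k
      unfolding N_def using g C_set_empty[of X] by (auto simp: from_nat_into)
  next
    fix p assume "p \<in> S"
    then obtain U D where UD: "openin X U" "C_set X D" "p \<in> U" "U \<subseteq> D" "D \<subseteq> S"
      using almost_zero_dimensional_C_set_neighbourhood assms(1,3) by metis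
    then obtain B where B: "B \<in> \<B>" "p \<in> B" "B \<subseteq> U" using \<B>(3) by blast
    then have "B \<in> \<B>'" unfolding \<B>'_def using UD by blast
    then have "N (to_nat_on \<B>' B) = g B" unfolding N_def using \<open>countable \<B>'\<close> by auto
    then show "\<exists>k W. openin X W \<and> p \<in> W \<and> W \<subseteq> N k"
      using g[OF \<open>B \<in> \<B>'\<close>] B \<B>(2) by blast
  qed
qed

lemma subspace_clopen_between_open_closed:
  assumes "metrizable_space X" "openin X V" "Y \<subseteq> topspace X"
    and "closedin (subtopology X Y) C" "openin (subtopology X Y) C" "X closure_of C \<subseteq> V"
  obtains U Z where "openin X U" "closedin X Z" "C \<subseteq> U" "U \<subseteq> Z" "Z \<subseteq> V" "disjnt (Z - U) Y"
proof -
  have topY: "topspace (subtopology X Y) = Y" using assms(3) by auto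
  have CY: "C \<subseteq> Y" using closedin_subset[OF assms(4)] topY by simp
  have "closedin (subtopology X Y) (Y - C)"
    using closedin_diff[OF closedin_topspace assms(5)] topY by simp
  then have "separatedin (subtopology X Y) C (Y - C)"
    using separatedin_closed_sets[OF assms(4)] by (simp add: disjnt_def)
  then have "separatedin X C (Y - C)" by (simp add: separatedin_subtopology)
  moreover have "separatedin X C (topspace X - V)"
  proof -
    have "X closure_of (topspace X - V) = topspace X - V"
      by (rule closure_of_closedin[OF closedin_diff[OF closedin_topspace assms(2)]])
    moreover have "C \<subseteq> V" by (meson CY assms(3,6) closure_of_subset subset_trans)
    ultimately show ?thesis unfolding separatedin_def using CY assms(3,6) by blast
  qed
  ultimately have "separatedin X C ((Y - C) \<union> (topspace X - V))" by simp
  then obtain U W where UW: "openin X U" "openin X W" "C \<subseteq> U"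
      "Y - C \<union> (topspace X - V) \<subseteq> W" "disjnt U W"
    using metrizable_space_separation[OF assms(1)] by meson
  show thesis
  proof
    show "U \<subseteq> topspace X - W" using openin_subset[OF UW(1)] UW(5) by (auto simp: disjnt_def)
    show "disjnt (topspace X - W - U) Y" using UW(3,4) unfolding disjnt_def by blast
  qed (use UW in auto)
qed

lemma clopen_neighbourhood_within_sigma_compact_gap:
  assumes "almost_zero_dimensional X" "second_countable X"
    and "openin X U" "closedin X Z" "U \<subseteq> Z" "sigma_compactin X (Z - U)" "a \<in> U"
  obtains G where "closedin X G" "openin X G" "a \<in> G" "G \<subseteq> Z"
proof -
  obtain F :: "nat \<Rightarrow> 'a set" where F: "\<And>n. compactin X (F n)" "Z - U = (\<Union>n. F n)"
    using sigma_compactin_nat_indexed[OF assms(6)] by blast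
  obtain N :: "nat \<Rightarrow> 'a set" where N: "\<And>k. C_set X (N k)" "\<And>k. N k \<subseteq> U"
    and N_int: "\<And>p. p \<in> U \<Longrightarrow> \<exists>k W. openin X W \<and> p \<in> W \<and> W \<subseteq> N k"
    using almost_zero_dimensional_C_set_cover[OF assms(1-3)] by blast
  obtain j where "a \<in> N j" using N_int assms(7) by blast
  define M where "M n = (\<Union>k \<in> insert j {..n}. N k)" for n
  have "\<exists>L. closedin X L \<and> openin X L \<and> F n \<subseteq> L \<and> disjnt L (M n)" for n
  proof (rule compactin_C_set_clopen_separation[OF F(1)])
    show "C_set X (M n)" unfolding M_def by (intro C_set_finite_UN N) simp
    show "disjnt (F n) (M n)" using F(2) N(2) unfolding M_def disjnt_def by blast
  qed blast
  then obtain L where L: "\<And>n. closedin X (L n)" "\<And>n. openin X (L n)"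
    "\<And>n. F n \<subseteq> L n" "\<And>n. disjnt (L n) (M n)"
    by metis
  have L_N: "disjnt (L n) (N k)" if "k \<le> n" for n k
    using L(4)[of n] that unfolding M_def disjnt_def by blast
  define G where "G = Z - (\<Union>n. L n)"
  have "openin X G"
  proof (subst openin_subopen, intro ballI)
    fix p assume p: "p \<in> G"
    then have "p \<in> U" using F(2) L(3) unfolding G_def by blast
    then obtain k W where W: "openin X W" "p \<in> W" "W \<subseteq> N k" using N_int by blast
    define T where "T = U \<inter> W - (\<Union>n<k. L n)"
    have "openin X T" unfolding T_def using assms(3) W(1) L(1)
      by (intro openin_diff openin_Int closedin_Union) auto
    moreover have "p \<in> T" using p \<open>p \<in> U\<close> W(2) unfolding T_def G_def by blast
    moreover have "T \<subseteq> G"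
    proof
      fix t assume t: "t \<in> T"
      have "t \<notin> L n" for n
      proof (cases "n < k")
        case True
        then show ?thesis using t unfolding T_def by blast
      next
        case False
        then show ?thesis using t W(3) L_N[of k n] unfolding T_def disjnt_def by auto
      qed
      then show "t \<in> G" using t assms(5) unfolding T_def G_def by blast
    qed
    ultimately show "\<exists>T. openin X T \<and> p \<in> T \<and> T \<subseteq> G" by blast
  qed
  moreover have "closedin X G"
    unfolding G_def using assms(4) L(2) by (intro closedin_diff openin_Union) auto
  moreover have "a \<in> G"
    using assms(5,7) \<open>a \<in> N j\<close> L(4) unfolding G_def M_def disjnt_def by blast
  ultimately show thesis using that G_def by blast
qed

lemma subspace_clopen_in_C_set_empty:
  assumes "metrizable_space X" "second_countable X" "almost_zero_dimensional X"
    and "sigma_compactin X K" "openin X V"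
    and no_clopen: "\<And>G. closedin X G \<Longrightarrow> openin X G \<Longrightarrow> G \<subseteq> V \<Longrightarrow> G = {}"
    and "C_set X D" "D \<subseteq> V" "C \<subseteq> D"
    and "closedin (subtopology X (topspace X - K)) C" "openin (subtopology X (topspace X - K)) C"
  shows "C = {}"
proof (rule ccontr)
  assume "C \<noteq> {}"
  have "X closure_of C \<subseteq> V"
    using closure_of_minimal[OF assms(9) closedin_C_set[OF assms(7)]] assms(8) by blast
  then obtain U Z where UZ: "openin X U" "closedin X Z" "C \<subseteq> U" "U \<subseteq> Z" "Z \<subseteq> V"
      "disjnt (Z - U) (topspace X - K)"
    using subspace_clopen_between_open_closed[OF assms(1,5) _ assms(10,11)] by blast
  have "sigma_compactin X (Z - U)"
    using sigma_compactin_closedin_subset[OF assms(4) closedin_diff[OF UZ(2,1)]]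
      closedin_subset[OF UZ(2)] UZ(6) unfolding disjnt_def by blast
  moreover obtain a where "a \<in> U" using \<open>C \<noteq> {}\<close> UZ(3) by blast
  ultimately obtain G where "closedin X G" "openin X G" "a \<in> G" "G \<subseteq> Z"
    using clopen_neighbourhood_within_sigma_compact_gap[OF assms(3,2) UZ(1,2,4)] by blast
  then show False using no_clopen UZ(5) by blast
qed

theorem theorem4p10:
  fixes X :: "'a topology" and K :: "'a set"
  assumes "metrizable_space X" and "separable_space X"
    and "cohesive X" and "almost_zero_dimensional X"
    and "K \<subseteq> topspace X" and "sigma_compactin X K"
  shows "cohesive (subtopology X (topspace X - K))"
  unfolding cohesive_def
proof
  let ?S = "subtopology X (topspace X - K)"
  fix x assume "x \<in> topspace ?S"
  then have x: "x \<in> topspace X" "x \<notin> K" by auto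
  obtain V where V: "openin X V" "x \<in> V"
    and V_no_clopen: "\<And>G. closedin X G \<Longrightarrow> openin X G \<Longrightarrow> G \<subseteq> V \<Longrightarrow> G = {}"
    using assms(3) x(1) unfolding cohesive_def by (meson subset_trans)
  obtain W D where WD: "openin X W" "C_set X D" "x \<in> W" "W \<subseteq> D" "D \<subseteq> V"
    using almost_zero_dimensional_C_set_neighbourhood[OF assms(4) V] by blast
  have "C = {}" if "closedin ?S C" "openin ?S C" "C \<subseteq> W" for C
    using subspace_clopen_in_C_set_empty[OF assms(1)
        separable_metrizable_imp_second_countable[OF assms(1,2)] assms(4,6) V(1) V_no_clopen WD(2,5)]
      that WD(4) by blast
  then show "\<exists>N. (\<exists>V. openin ?S V \<and> x \<in> V \<and> V \<subseteq> N) \<and> N \<subseteq> topspace ?S \<and>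
        \<not> (\<exists>C. C \<noteq> {} \<and> closedin ?S C \<and> openin ?S C \<and> C \<subseteq> N)"
    using openin_subtopology_Int[OF WD(1)] x WD(3)
    by (intro exI[of _ "W \<inter> (topspace X - K)"]) auto
qed

end
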